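(* Let $\overline{G}$ be an acyclic amplified graph with finitely many vertices, and let $S$ be the set of sources of $\overline{G}$. Let $H\subseteq\bigoplus_{v\in\overline{G}^0}\mathbb{Z}$ be the monoid generated by $\{\delta_v: v\in\overline{G}^0\}\cup\{\delta_v-\sum_{e\in T}\delta_{r(e)} : v\in\overline{G}^0_{\mathrm{inf}},\ T\text{ a finite subset of }s^{-1}(v)\}$. If $(n_v)_{v\in\overline{G}^0}\in H$ satisfies $n_v\ge1$ for all $v\in S$, then there exist $(m_v)_{v\in\overline{G}^0}\in H$ with $m_v\ge1$ for all $v\in\overline{G}^0$ and a group isomorphism $\alpha\colon\bigoplus_{v\in\overline{G}^0}\mathbb{Z}\to\bigoplus_{v\in\overline{G}^0}\mathbb{Z}$ such that $\alpha(H)=H$ and $\alpha((n_v)_v)=(m_v)_v$.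
   Context: A graph $E=(E^0,E^1,r,s)$ is amplified if for every edge $e$ the number of edges from $s(e)$ to $r(e)$ is countably infinite; it is acyclic if it has no cycles. A source is a vertex $v$ with $r^{-1}(v)=\emptyset$. $\overline{G}^0_{\mathrm{inf}}$ denotes the set of infinite emitters (vertices $v$ with $s^{-1}(v)$ infinite). $\delta_v$ denotes the standard basis element at $v$. *)

theory Defs
  imports Main "HOL-Library.Countable_Set" "HOL-Library.Function_Algebras"
begin

definition is_graph :: "'v set \<Rightarrow> 'e set \<Rightarrow> ('e \<Rightarrow> 'v) \<Rightarrow> ('e \<Rightarrow> 'v) \<Rightarrow> bool" where
  "is_graph V E s r \<longleftrightarrow> s ` E \<subseteq> V \<and> r ` E \<subseteq> V"

definition amplified :: "'e set \<Rightarrow> ('e \<Rightarrow> 'v) \<Rightarrow> ('e \<Rightarrow> 'v) \<Rightarrow> bool" where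
  "amplified E s r \<longleftrightarrow> (\<forall>e\<in>E. infinite {f\<in>E. s f = s e \<and> r f = r e}
                                 \<and> countable {f\<in>E. s f = s e \<and> r f = r e})"

definition graph_acyclic :: "'e set \<Rightarrow> ('e \<Rightarrow> 'v) \<Rightarrow> ('e \<Rightarrow> 'v) \<Rightarrow> bool" where
  "graph_acyclic E s r \<longleftrightarrow> acyclic {(s e, r e) | e. e \<in> E}"

definition sources :: "'v set \<Rightarrow> 'e set \<Rightarrow> ('e \<Rightarrow> 'v) \<Rightarrow> 'v set" where
  "sources V E r = {v\<in>V. \<not> (\<exists>e\<in>E. r e = v)}"

definition inf_emitters :: "'v set \<Rightarrow> 'e set \<Rightarrow> ('e \<Rightarrow> 'v) \<Rightarrow> 'v set" where
  "inf_emitters V E s = {v\<in>V. infinite {e\<in>E. s e = v}}"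

definition zvec :: "'v set \<Rightarrow> ('v \<Rightarrow> int) set" where
  "zvec V = {x. \<forall>u. u \<notin> V \<longrightarrow> x u = 0}"

definition delta :: "'v \<Rightarrow> 'v \<Rightarrow> int" where
  "delta v = (\<lambda>u. if u = v then 1 else 0)"

definition generators :: "'v set \<Rightarrow> 'e set \<Rightarrow> ('e \<Rightarrow> 'v) \<Rightarrow> ('e \<Rightarrow> 'v) \<Rightarrow> ('v \<Rightarrow> int) set" where
  "generators V E s r =
     {delta v | v. v \<in> V} \<union>
     {(\<lambda>u. delta v u - (\<Sum>e\<in>T. delta (r e) u)) | v T.
        v \<in> inf_emitters V E s \<and> finite T \<and> T \<subseteq> {e\<in>E. s e = v}}"

inductive_set monoid_gen :: "('v \<Rightarrow> int) set \<Rightarrow> ('v \<Rightarrow> int) set" for G where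
  zero: "0 \<in> monoid_gen G"
| add: "x \<in> monoid_gen G \<Longrightarrow> g \<in> G \<Longrightarrow> x + g \<in> monoid_gen G"

definition group_iso_on :: "('v \<Rightarrow> int) set \<Rightarrow> (('v \<Rightarrow> int) \<Rightarrow> ('v \<Rightarrow> int)) \<Rightarrow> bool" where
  "group_iso_on A \<alpha> \<longleftrightarrow> bij_betw \<alpha> A A \<and> (\<forall>x\<in>A. \<forall>y\<in>A. \<alpha> (x + y) = \<alpha> x + \<alpha> y)"

end

theory Submission imports Defs begin

text \<open>For an edge \<open>e\<close> from \<open>w\<close> to \<open>u\<close>, the elementary transvection \<open>x \<mapsto> x + c x\<^sub>w \<delta>\<^sub>u\<close>
  is an automorphism of the lattice (its inverse uses \<open>-c\<close>) and maps \<open>H\<close> into \<open>H\<close>: a generator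
  \<open>g\<close> with \<open>c g\<^sub>w \<ge> 0\<close> only gains a non-negative multiple of \<open>\<delta>\<^sub>u\<close>, and the other generators are
  handled by the elements \<open>\<delta>\<^sub>w - k \<delta>\<^sub>u\<close> (\<open>k \<ge> 0\<close>) of \<open>H\<close>, which exist because there are
  infinitely many parallel edges from \<open>w\<close> to \<open>u\<close>.
  Since the graph is finite and acyclic, a vertex \<open>u\<close> with \<open>n\<^sub>u < 1\<close> that is minimal among such
  vertices is not a source, so it receives an edge from some \<open>w\<close> with \<open>n\<^sub>w \<ge> 1\<close>; a transvection
  along that edge makes \<open>n\<^sub>u \<ge> 1\<close> without changing the other coordinates. Induct on the number
  of vertices \<open>v\<close> with \<open>n\<^sub>v < 1\<close>.\<close>

definition transvection :: "'v \<Rightarrow> 'v \<Rightarrow> int \<Rightarrow> ('v \<Rightarrow> int) \<Rightarrow> ('v \<Rightarrow> int)" where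
  "transvection w u c x = (\<lambda>y. x y + c * x w * delta u y)"

lemma transvection_add: "transvection w u c (x + y) = transvection w u c x + transvection w u c y"
  by (auto simp: transvection_def fun_eq_iff algebra_simps)

lemma transvection_inverse: "w \<noteq> u \<Longrightarrow> transvection w u (- c) (transvection w u c x) = x"
  by (auto simp: transvection_def fun_eq_iff delta_def)

lemma transvection_other: "v \<noteq> u \<Longrightarrow> transvection w u c x v = x v"
  by (simp add: transvection_def delta_def)

lemma transvection_target: "transvection w u c x u = x u + c * x w"
  by (simp add: transvection_def delta_def)

lemma monoid_gen_add:
  assumes "x \<in> monoid_gen G" and "y \<in> monoid_gen G"
  shows "x + y \<in> monoid_gen G"
  using assms(2)
proof (induction y rule: monoid_gen.induct)
  case (add y g)
  then show ?case by (metis add.assoc monoid_gen.add)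
qed (simp add: assms(1))

lemma generator_in_monoid_gen: "g \<in> G \<Longrightarrow> g \<in> monoid_gen G"
  using monoid_gen.add[OF monoid_gen.zero, of g G] by simp

lemma monoid_gen_scale:
  assumes "x \<in> monoid_gen G" and "k \<ge> 0"
  shows "(\<lambda>y. k * x y) \<in> monoid_gen G"
proof -
  have "(\<lambda>y. int m * x y) \<in> monoid_gen G" for m
  proof (induction m)
    case 0
    then show ?case using monoid_gen.zero by (simp add: zero_fun_def)
  next
    case (Suc m)
    have "(\<lambda>y. int (Suc m) * x y) = x + (\<lambda>y. int m * x y)"
      by (simp add: fun_eq_iff algebra_simps)
    then show ?case using Suc assms(1) monoid_gen_add by metis
  qed
  then show ?thesis using \<open>k \<ge> 0\<close> by (metis nonneg_int_cases)
qed

lemma group_iso_on_id: "group_iso_on A id"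
  by (simp add: group_iso_on_def)

lemma group_iso_on_comp:
  assumes "group_iso_on A \<alpha>" and "group_iso_on A \<beta>"
  shows "group_iso_on A (\<beta> \<circ> \<alpha>)"
proof -
  have "\<alpha> x \<in> A" if "x \<in> A" for x
    using assms(1) that by (auto simp: group_iso_on_def bij_betw_def)
  then show ?thesis
    using assms bij_betw_trans by (simp add: group_iso_on_def) blast
qed

locale amplified_acyclic_graph =
  fixes V :: "'v set" and E :: "'e set" and s r :: "'e \<Rightarrow> 'v"
  assumes graph: "is_graph V E s r" and finite_vertices: "finite V"
    and amplified: "amplified E s r" and acyclic: "graph_acyclic E s r"
begin

abbreviation "G \<equiv> generators V E s r"
abbreviation "H \<equiv> monoid_gen G"

definition H_automorphism :: "(('v \<Rightarrow> int) \<Rightarrow> ('v \<Rightarrow> int)) \<Rightarrow> bool" where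
  "H_automorphism \<alpha> \<longleftrightarrow> group_iso_on (zvec V) \<alpha> \<and> \<alpha> ` H = H"

lemma source_in_V: "e \<in> E \<Longrightarrow> s e \<in> V" and range_in_V: "e \<in> E \<Longrightarrow> r e \<in> V"
  using graph unfolding is_graph_def by auto

lemma source_ne_range: "e \<in> E \<Longrightarrow> s e \<noteq> r e"
  using acyclic unfolding graph_acyclic_def acyclic_def by (metis (mono_tags, lifting) CollectI r_into_trancl')

lemma delta_in_H: "v \<in> V \<Longrightarrow> delta v \<in> H"
  by (rule generator_in_monoid_gen) (auto simp: generators_def)

lemma infinite_parallel_edges: "e \<in> E \<Longrightarrow> infinite {f\<in>E. s f = s e \<and> r f = r e}"
  using amplified unfolding amplified_def by blast

lemma source_in_inf_emitters: "e \<in> E \<Longrightarrow> s e \<in> inf_emitters V E s"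
  using infinite_super[OF _ infinite_parallel_edges] source_in_V
  unfolding inf_emitters_def by (metis (mono_tags, lifting) mem_Collect_eq subsetI)

text \<open>A relation \<open>\<delta>\<^sub>v - \<Sum>\<^sub>T \<delta>\<^sub>r\<^sub>(\<^sub>e\<^sub>)\<close> stays a relation after subtracting \<open>k \<delta>\<^sub>r\<^sub>(\<^sub>e\<^sub>0\<^sub>)\<close> for
  an edge \<open>e0\<close> out of \<open>v\<close>: add \<open>k\<close> fresh parallel copies of \<open>e0\<close> to \<open>T\<close>.\<close>
lemma relation_minus_range_in_G:
  assumes v: "v \<in> inf_emitters V E s" and T: "finite T" "T \<subseteq> {e\<in>E. s e = v}"
    and e0: "e0 \<in> E" "s e0 = v" and k: "k \<ge> 0"
  shows "(\<lambda>y. delta v y - (\<Sum>e\<in>T. delta (r e) y) - k * delta (r e0) y) \<in> G"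
proof -
  have "infinite ({f\<in>E. s f = s e0 \<and> r f = r e0} - T)"
    using infinite_parallel_edges[OF e0(1)] T(1) Diff_infinite_finite by blast
  then obtain T' where T': "finite T'" "card T' = nat k" "T' \<subseteq> {f\<in>E. s f = s e0 \<and> r f = r e0} - T"
    using infinite_arbitrarily_large by blast
  have "(\<Sum>e\<in>T \<union> T'. delta (r e) y) = (\<Sum>e\<in>T. delta (r e) y) + (\<Sum>e\<in>T'. delta (r e) y)" for y
    using T(1) T' by (intro sum.union_disjoint) auto
  moreover have "(\<Sum>e\<in>T'. delta (r e) y) = k * delta (r e0) y" for y
    using T' k by (simp add: sum.cong[of T' T' "\<lambda>e. delta (r e) y" "\<lambda>_. delta (r e0) y"] subset_iff)
  ultimately have "(\<Sum>e\<in>T \<union> T'. delta (r e) y) = (\<Sum>e\<in>T. delta (r e) y) + k * delta (r e0) y" for y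
    by simp
  then have "(\<lambda>y. delta v y - (\<Sum>e\<in>T. delta (r e) y) - k * delta (r e0) y)
      = (\<lambda>y. delta v y - (\<Sum>e\<in>T \<union> T'. delta (r e) y))"
    by (simp add: fun_eq_iff)
  moreover have "finite (T \<union> T')" "T \<union> T' \<subseteq> {e\<in>E. s e = v}" using T T' e0 by auto
  ultimately show ?thesis using v unfolding generators_def by blast
qed

lemma delta_source_minus_range_in_H:
  assumes "e \<in> E" and "k \<ge> 0"
  shows "(\<lambda>y. delta (s e) y - k * delta (r e) y) \<in> H"
  using relation_minus_range_in_G[OF source_in_inf_emitters[OF assms(1)] _ _ assms(1) refl assms(2),
      of "{}"]
  by (simp add: generator_in_monoid_gen)

lemma transvection_in_H_if_increment_nonneg:
  assumes "x \<in> H" and "u \<in> V" and "c * x w \<ge> 0"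
  shows "transvection w u c x \<in> H"
proof -
  have "transvection w u c x = x + (\<lambda>y. (c * x w) * delta u y)"
    by (simp add: transvection_def fun_eq_iff)
  then show ?thesis
    using monoid_gen_add[OF assms(1) monoid_gen_scale[OF delta_in_H[OF assms(2)] assms(3)]] by simp
qed

lemma transvection_delta_in_H:
  assumes e: "e \<in> E" and v: "v \<in> V"
  shows "transvection (s e) (r e) c (delta v) \<in> H"
proof (cases "c * delta v (s e) \<ge> 0")
  case True
  then show ?thesis using transvection_in_H_if_increment_nonneg[OF delta_in_H[OF v] range_in_V[OF e]] by blast
next
  case False
  then have "v = s e" "c < 0" by (auto simp: delta_def split: if_splits)
  then have "transvection (s e) (r e) c (delta v) = (\<lambda>y. delta (s e) y - (- c) * delta (r e) y)"
    by (simp add: transvection_def fun_eq_iff delta_def)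
  then show ?thesis using delta_source_minus_range_in_H[OF e, of "- c"] \<open>c < 0\<close> by simp
qed

lemma transvection_relation_at_source_in_H:
  assumes e: "e \<in> E" and T: "finite T" "T \<subseteq> {f\<in>E. s f = s e}"
  shows "transvection (s e) (r e) c (\<lambda>y. delta (s e) y - (\<Sum>f\<in>T. delta (r f) y)) \<in> H"
    (is "transvection _ _ c ?g \<in> H")
proof -
  have gG: "?g \<in> G"
    using source_in_inf_emitters[OF e] T unfolding generators_def by blast
  have "(\<Sum>f\<in>T. delta (r f) (s e)) = 0"
    using T source_ne_range by (intro sum.neutral) (force simp: delta_def)
  then have g_source: "?g (s e) = 1" by (simp add: delta_def)
  show ?thesis
  proof (cases "c \<ge> 0")
    case True
    then show ?thesis
      using transvection_in_H_if_increment_nonneg[OF generator_in_monoid_gen[OF gG] range_in_V[OF e]]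
      by (simp add: g_source)
  next
    case False
    have "transvection (s e) (r e) c ?g = (\<lambda>y. ?g y - (- c) * delta (r e) y)"
      by (simp add: transvection_def fun_eq_iff g_source)
    moreover have "(\<lambda>y. ?g y - (- c) * delta (r e) y) \<in> G"
      using relation_minus_range_in_G[OF source_in_inf_emitters[OF e] T e refl, of "- c"] False by simp
    ultimately show ?thesis by (simp add: generator_in_monoid_gen)
  qed
qed

text \<open>If \<open>T\<close> contains \<open>j > 0\<close> edges into \<open>w = s(e)\<close>, the image \<open>g - c j \<delta>\<^sub>u\<close> of the relation
  \<open>g\<close> splits as \<open>(g - j \<delta>\<^sub>w) + j (\<delta>\<^sub>w - c \<delta>\<^sub>u)\<close>, where \<open>g - j \<delta>\<^sub>w\<close> is again a relation.\<close>
lemma transvection_relation_elsewhere_in_H: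
  assumes e: "e \<in> E" and v: "v \<in> inf_emitters V E s" "v \<noteq> s e"
    and T: "finite T" "T \<subseteq> {f\<in>E. s f = v}"
  shows "transvection (s e) (r e) c (\<lambda>y. delta v y - (\<Sum>f\<in>T. delta (r f) y)) \<in> H"
    (is "transvection _ _ c ?g \<in> H")
proof -
  have gH: "?g \<in> H"
    using v T unfolding generators_def by (blast intro: generator_in_monoid_gen)
  define j where "j = (\<Sum>f\<in>T. delta (r f) (s e))"
  have j: "j \<ge> 0" unfolding j_def delta_def by (intro sum_nonneg) auto
  have g_source: "?g (s e) = - j" using v(2) by (simp add: j_def delta_def)
  show ?thesis
  proof (cases "c \<le> 0 \<or> j = 0")
    case True
    then have "c * ?g (s e) \<ge> 0" using j by (auto simp: g_source mult_nonpos_nonneg)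
    then show ?thesis using transvection_in_H_if_increment_nonneg[OF gH range_in_V[OF e]] by blast
  next
    case False
    then have "c > 0" "j > 0" using j by auto
    then obtain f where f: "f \<in> T" "r f = s e"
      unfolding j_def by (metis (mono_tags, lifting) delta_def less_irrefl sum.neutral)
    have "transvection (s e) (r e) c ?g = (\<lambda>y. ?g y - c * j * delta (r e) y)"
      by (simp add: transvection_def fun_eq_iff g_source)
    also have "\<dots> = (\<lambda>y. ?g y - j * delta (r f) y) + (\<lambda>y. j * (delta (s e) y - c * delta (r e) y))"
      using f(2) by (simp add: fun_eq_iff algebra_simps)
    finally have split: "transvection (s e) (r e) c ?g = \<dots>" .
    have "(\<lambda>y. ?g y - j * delta (r f) y) \<in> G"
      using relation_minus_range_in_G[OF v(1) T _ _ j, of f] f T(2) by auto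
    moreover have "(\<lambda>y. j * (delta (s e) y - c * delta (r e) y)) \<in> H"
      using monoid_gen_scale[OF delta_source_minus_range_in_H[OF e] j] \<open>c > 0\<close> by simp
    ultimately show ?thesis unfolding split by (rule monoid_gen_add[OF generator_in_monoid_gen])
  qed
qed

lemma transvection_generator_in_H:
  assumes e: "e \<in> E" and g: "g \<in> G"
  shows "transvection (s e) (r e) c g \<in> H"
proof -
  from g consider (delta) v where "v \<in> V" "g = delta v"
    | (relation) v T where "v \<in> inf_emitters V E s" "finite T" "T \<subseteq> {f\<in>E. s f = v}"
        "g = (\<lambda>y. delta v y - (\<Sum>f\<in>T. delta (r f) y))"
    unfolding generators_def by blast
  then show ?thesis
  proof cases
    case (relation v T)
    then show ?thesis
      using transvection_relation_at_source_in_H[OF e] transvection_relation_elsewhere_in_H[OF e]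
      by (cases "v = s e") auto
  qed (simp add: transvection_delta_in_H[OF e])
qed

lemma transvection_in_H:
  assumes "e \<in> E" and "x \<in> H"
  shows "transvection (s e) (r e) c x \<in> H"
  using assms(2)
proof (induction x rule: monoid_gen.induct)
  case zero
  have "transvection (s e) (r e) c 0 = 0" by (simp add: transvection_def fun_eq_iff)
  then show ?case using monoid_gen.zero by metis
next
  case (add x g)
  then show ?case
    using transvection_generator_in_H[OF assms(1)] transvection_add monoid_gen_add by metis
qed

lemma H_automorphism_comp: "H_automorphism \<alpha> \<Longrightarrow> H_automorphism \<beta> \<Longrightarrow> H_automorphism (\<beta> \<circ> \<alpha>)"
  unfolding H_automorphism_def by (metis group_iso_on_comp image_comp)

lemma H_automorphism_transvection:
  assumes e: "e \<in> E"
  shows "H_automorphism (transvection (s e) (r e) c)"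
proof -
  define w u where "w = s e" and "u = r e"
  have uV: "u \<in> V" and wu: "w \<noteq> u"
    using range_in_V[OF e] source_ne_range[OF e] by (simp_all add: w_def u_def)
  have closed: "transvection w u c' ` zvec V \<subseteq> zvec V" for c'
    using uV unfolding zvec_def transvection_def delta_def by auto
  have "bij_betw (transvection w u c) (zvec V) (zvec V)"
    by (rule bij_betw_byWitness[where f' = "transvection w u (- c)"])
      (use closed transvection_inverse[OF wu] transvection_inverse[OF wu, of "- c"] in auto)
  moreover have "transvection w u c ` H = H"
  proof
    show "transvection w u c ` H \<subseteq> H" using transvection_in_H[OF e] by (auto simp: w_def u_def)
    show "H \<subseteq> transvection w u c ` H"
    proof
      fix x assume "x \<in> H"
      then have "transvection w u (- c) x \<in> H" using transvection_in_H[OF e] by (simp add: w_def u_def)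
      then show "x \<in> transvection w u c ` H"
        using transvection_inverse[OF wu, of "- c" x] by (metis minus_minus image_eqI)
    qed
  qed
  ultimately show ?thesis
    unfolding H_automorphism_def group_iso_on_def w_def u_def by (simp add: transvection_add)
qed

lemma edge_into_minimal_bad_vertex:
  fixes x :: "'v \<Rightarrow> int"
  assumes sources: "\<forall>v\<in>sources V E r. x v \<ge> 1" and bad: "u0 \<in> V" "x u0 < 1"
  obtains e where "e \<in> E" "x (s e) \<ge> 1" "x (r e) < 1"
proof -
  define R where "R = {(s e, r e) | e. e \<in> E}"
  have "R \<subseteq> V \<times> V" unfolding R_def using source_in_V range_in_V by blast
  then have "finite R" using finite_vertices by (meson finite_SigmaI finite_subset)
  moreover have "acyclic R" using acyclic unfolding graph_acyclic_def R_def .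
  ultimately have "wf R" by (rule finite_acyclic_wf)
  have "\<exists>u\<in>{v\<in>V. x v < 1}. \<forall>y. (y, u) \<in> R \<longrightarrow> y \<notin> {v\<in>V. x v < 1}"
    using wf_eq_minimal[THEN iffD1, rule_format, OF \<open>wf R\<close>, of u0 "{v\<in>V. x v < 1}"] bad by simp
  then obtain u where u: "u \<in> V" "x u < 1" and minimal: "\<And>y. (y, u) \<in> R \<Longrightarrow> y \<in> V \<Longrightarrow> x y \<ge> 1"
    by (auto simp: not_less)
  have "u \<notin> sources V E r" using sources u(2) by auto
  then obtain e where e: "e \<in> E" "r e = u" using u(1) unfolding sources_def by blast
  then have "(s e, u) \<in> R" unfolding R_def by blast
  then have "x (s e) \<ge> 1" using minimal source_in_V[OF e(1)] by blast
  then show ?thesis using that e u by simp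
qed

lemma exists_H_automorphism_to_positive:
  "x \<in> H \<Longrightarrow> \<forall>v\<in>sources V E r. x v \<ge> 1 \<Longrightarrow> \<exists>\<alpha>. H_automorphism \<alpha> \<and> (\<forall>v\<in>V. \<alpha> x v \<ge> 1)"
proof (induction "card {v\<in>V. x v < 1}" arbitrary: x rule: less_induct)
  case less
  show ?case
  proof (cases "\<forall>v\<in>V. x v \<ge> 1")
    case True
    then show ?thesis using group_iso_on_id unfolding H_automorphism_def by fastforce
  next
    case False
    then obtain u where "u \<in> V" "x u < 1" by (auto simp: not_le)
    then obtain e where e: "e \<in> E" "x (s e) \<ge> 1" "x (r e) < 1"
      using edge_into_minimal_bad_vertex[OF less.prems(2)] by blast
    define \<tau> where "\<tau> = transvection (s e) (r e) (1 - x (r e))"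
    have "1 - x (r e) \<le> (1 - x (r e)) * x (s e)"
      using mult_left_mono[OF e(2), of "1 - x (r e)"] e(3) by simp
    then have repaired: "\<tau> x (r e) \<ge> 1" by (simp add: \<tau>_def transvection_target)
    have other: "\<tau> x v = x v" if "v \<noteq> r e" for v
      using that by (simp add: \<tau>_def transvection_other)
    have "{v\<in>V. \<tau> x v < 1} = {v\<in>V. x v < 1} - {r e}"
    proof (rule set_eqI)
      fix v
      show "v \<in> {v\<in>V. \<tau> x v < 1} \<longleftrightarrow> v \<in> {v\<in>V. x v < 1} - {r e}"
        by (cases "v = r e") (use repaired other in auto)
    qed
    then have "card {v\<in>V. \<tau> x v < 1} < card {v\<in>V. x v < 1}"
      using card_Diff1_less[of "{v\<in>V. x v < 1}" "r e"] e(1,3) range_in_V finite_vertices by simp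
    moreover have "\<tau> x \<in> H" using transvection_in_H[OF e(1) less.prems(1)] by (simp add: \<tau>_def)
    moreover have "\<forall>v\<in>sources V E r. \<tau> x v \<ge> 1"
    proof
      fix v assume "v \<in> sources V E r"
      moreover from this have "v \<noteq> r e" using e(1) unfolding sources_def by blast
      ultimately show "\<tau> x v \<ge> 1" using less.prems(2) other by simp
    qed
    ultimately obtain \<beta> where "H_automorphism \<beta>" "\<forall>v\<in>V. \<beta> (\<tau> x) v \<ge> 1"
      using less.hyps by blast
    then show ?thesis
      using H_automorphism_comp[OF H_automorphism_transvection[OF e(1)]] unfolding \<tau>_def by fastforce
  qed
qed

end

theorem lemma3p9:
  fixes V :: "'v set" and E :: "'e set" and s r :: "'e \<Rightarrow> 'v" and n :: "'v \<Rightarrow> int"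
  assumes "is_graph V E s r" and "finite V"
    and "amplified E s r" and "graph_acyclic E s r"
    and "n \<in> monoid_gen (generators V E s r)"
    and "\<forall>v\<in>sources V E r. n v \<ge> 1"
  shows "\<exists>m \<alpha>. m \<in> monoid_gen (generators V E s r) \<and> (\<forall>v\<in>V. m v \<ge> 1)
           \<and> group_iso_on (zvec V) \<alpha>
           \<and> \<alpha> ` monoid_gen (generators V E s r) = monoid_gen (generators V E s r)
           \<and> \<alpha> n = m"
proof -
  interpret amplified_acyclic_graph V E s r using assms(1-4) by unfold_locales
  obtain \<alpha> where "H_automorphism \<alpha>" "\<forall>v\<in>V. \<alpha> n v \<ge> 1"
    using exists_H_automorphism_to_positive[OF assms(5,6)] by blast
  moreover have "\<alpha> n \<in> H" using calculation(1) assms(5) unfolding H_automorphism_def by blast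
  ultimately show ?thesis unfolding H_automorphism_def by blast
qed

end
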